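(* Let $A$ be an $n\times n$ complex matrix with eigenvalues (counted with algebraic multiplicity) $\lambda_1,\lambda_2,\dots,\lambda_n$. Let $\mathbf{w}_1,\dots,\mathbf{w}_k$ be left eigenvectors of $A$ for the eigenvalues $\lambda_1,\dots,\lambda_k$, respectively. If $\mathbf{x}\in\mathbb{C}^n$ satisfies $\mathbf{w}_j^{*}\mathbf{x}=0$ for $j=2,\dots,k$, then the eigenvalues of $A+\mathbf{x}(\mathbf{w}_1+\cdots+\mathbf{w}_k)^{*}$, counted with multiplicity, are $\lambda_1+\mathbf{w}_1^{*}\mathbf{x},\lambda_2,\dots,\lambda_n$.
   Context: A left eigenvector $\mathbf{w}$ of $A$ for eigenvalue $\lambda$ is a nonzero vector with $\mathbf{w}^{*}A=\lambda\mathbf{w}^{*}$. *)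

theory Defs
  imports "Jordan_Normal_Form.Matrix" "Jordan_Normal_Form.Char_Poly"
begin

definition vec_star :: "complex vec \<Rightarrow> complex mat" where
  "vec_star w = mat_of_row (conjugate w)"

definition left_eigenvector :: "complex mat \<Rightarrow> complex vec \<Rightarrow> complex \<Rightarrow> bool" where
  "left_eigenvector A w l \<longleftrightarrow>
     w \<in> carrier_vec (dim_row A) \<and> w \<noteq> 0\<^sub>v (dim_row A) \<and>
     vec_star w * A = l \<cdot>\<^sub>m vec_star w"

end

theory Submission imports Defs begin

text \<open>
  For t outside the spectrum of A the matrix N = tI - A is invertible, and the matrix
  determinant lemma gives det (N - x v^* ) = det N * (1 - v^* N^-1 x) with v = w_1 + ... + w_k.
  A left eigenvector w_j of A is a left eigenvector of N^-1 for the eigenvalue 1/(t - lambda_j),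
  so v^* N^-1 x is the sum of the w_j^* x / (t - lambda_j), which is w_1^* x / (t - lambda_1) by
  the orthogonality hypothesis. Hence both characteristic polynomials agree at all but finitely
  many points, so they are equal.
\<close>

lemma det_one_minus_rank_one:
  fixes Y Z :: "'a :: idom mat"
  assumes Y: "Y \<in> carrier_mat n 1" and Z: "Z \<in> carrier_mat 1 n"
  shows "det (1\<^sub>m n - Y * Z) = 1 - (Z * Y) $$ (0,0)"
proof -
  \<comment> \<open>Both products of the block matrices M and L are block triangular, and det (M L) = det (L M).\<close>
  let ?M = "four_block_mat (1\<^sub>m n) Y Z (1\<^sub>m 1)"
  let ?L = "four_block_mat (1\<^sub>m n) (0\<^sub>m n 1) (-Z) (1\<^sub>m 1)"
  have M: "?M \<in> carrier_mat (n+1) (n+1)" and L: "?L \<in> carrier_mat (n+1) (n+1)"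
    using Y Z by auto
  have "?L * ?M = four_block_mat (1\<^sub>m n * 1\<^sub>m n + 0\<^sub>m n 1 * Z) (1\<^sub>m n * Y + 0\<^sub>m n 1 * 1\<^sub>m 1)
      (-Z * 1\<^sub>m n + 1\<^sub>m 1 * Z) (-Z * Y + 1\<^sub>m 1 * 1\<^sub>m 1)"
    using Y Z by (intro mult_four_block_mat) auto
  also have "\<dots> = four_block_mat (1\<^sub>m n) Y (0\<^sub>m 1 n) (1\<^sub>m 1 - Z * Y)"
  proof -
    have "1\<^sub>m n * 1\<^sub>m n + 0\<^sub>m n 1 * Z = 1\<^sub>m n" "1\<^sub>m n * Y + 0\<^sub>m n 1 * 1\<^sub>m 1 = Y"
      "-Z * 1\<^sub>m n + 1\<^sub>m 1 * Z = 0\<^sub>m 1 n" "-Z * Y + 1\<^sub>m 1 * 1\<^sub>m 1 = 1\<^sub>m 1 - Z * Y"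
      using Y Z by (auto intro!: eq_matI)
    then show ?thesis by simp
  qed
  finally have L_M: "?L * ?M = four_block_mat (1\<^sub>m n) Y (0\<^sub>m 1 n) (1\<^sub>m 1 - Z * Y)" .
  have "?M * ?L = four_block_mat (1\<^sub>m n * 1\<^sub>m n + Y * -Z) (1\<^sub>m n * 0\<^sub>m n 1 + Y * 1\<^sub>m 1)
      (Z * 1\<^sub>m n + 1\<^sub>m 1 * -Z) (Z * 0\<^sub>m n 1 + 1\<^sub>m 1 * 1\<^sub>m 1)"
    using Y Z by (intro mult_four_block_mat) auto
  also have "\<dots> = four_block_mat (1\<^sub>m n - Y * Z) Y (0\<^sub>m 1 n) (1\<^sub>m 1)"
  proof -
    have "1\<^sub>m n * 1\<^sub>m n + Y * -Z = 1\<^sub>m n - Y * Z" "1\<^sub>m n * 0\<^sub>m n 1 + Y * 1\<^sub>m 1 = Y"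
      "Z * 1\<^sub>m n + 1\<^sub>m 1 * -Z = 0\<^sub>m 1 n" "Z * 0\<^sub>m n 1 + 1\<^sub>m 1 * 1\<^sub>m 1 = (1\<^sub>m 1 :: 'a mat)"
      using Y Z by (auto intro!: eq_matI)
    then show ?thesis by simp
  qed
  finally have M_L: "?M * ?L = four_block_mat (1\<^sub>m n - Y * Z) Y (0\<^sub>m 1 n) (1\<^sub>m 1)" .
  have "det (1\<^sub>m n - Y * Z) = det (?M * ?L)"
    unfolding M_L using Y Z by (subst det_four_block_mat_lower_left_zero[of _ n _ 1]) auto
  also have "\<dots> = det (?L * ?M)"
    using det_mult[OF L M] det_mult[OF M L] by (simp add: mult.commute)
  also have "\<dots> = det (1\<^sub>m 1 - Z * Y)"
    unfolding L_M using Y Z by (subst det_four_block_mat_lower_left_zero[of _ n _ 1]) auto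
  also have "\<dots> = 1 - (Z * Y) $$ (0,0)"
    using Y Z by (subst det_single) auto
  finally show ?thesis .
qed

lemma det_minus_rank_one:
  fixes N :: "'a :: idom mat"
  assumes N: "N \<in> carrier_mat n n" and Ni: "Ni \<in> carrier_mat n n" and inv: "N * Ni = 1\<^sub>m n"
    and x: "x \<in> carrier_vec n" and y: "y \<in> carrier_vec n"
  shows "det (N - mat_of_cols n [x] * mat_of_row y) = det N * (1 - y \<bullet> (Ni *\<^sub>v x))"
proof -
  let ?X = "mat_of_cols n [x]" and ?Y = "mat_of_row y"
  have X: "?X \<in> carrier_mat n 1" and Y: "?Y \<in> carrier_mat 1 n" using y by auto
  have "N * (1\<^sub>m n - Ni * ?X * ?Y) = N * 1\<^sub>m n - N * (Ni * ?X * ?Y)"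
    using N Ni X Y by (intro mult_minus_distrib_mat) auto
  also have "N * (Ni * ?X * ?Y) = (N * Ni) * (?X * ?Y)"
    using X Y by (simp add: assoc_mult_mat[OF Ni X Y] assoc_mult_mat[OF N Ni, of "?X * ?Y" n])
  finally have "N * (1\<^sub>m n - Ni * ?X * ?Y) = N - ?X * ?Y"
    using N X Y inv by simp
  then have "det (N - ?X * ?Y) = det N * det (1\<^sub>m n - Ni * ?X * ?Y)"
    using N Ni X Y by (metis det_mult minus_carrier_mat one_carrier_mat mult_carrier_mat)
  also have "det (1\<^sub>m n - Ni * ?X * ?Y) = 1 - (?Y * (Ni * ?X)) $$ (0,0)"
    using Ni X Y by (intro det_one_minus_rank_one) auto
  also have "(?Y * (Ni * ?X)) $$ (0,0) = y \<bullet> (Ni *\<^sub>v x)"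
    using Ni x y by (simp add: mat_vec_as_mat_mat_mult[OF Ni x])
  finally show ?thesis .
qed

lemma right_inverse_of_det_nonzero:
  fixes N :: "'a :: field mat"
  assumes N: "N \<in> carrier_mat n n" and det: "det N \<noteq> 0"
  obtains Ni where "Ni \<in> carrier_mat n n" and "N * Ni = 1\<^sub>m n"
proof
  show "(1 / det N) \<cdot>\<^sub>m adj_mat N \<in> carrier_mat n n"
    using adj_mat(1)[OF N] by simp
  show "N * ((1 / det N) \<cdot>\<^sub>m adj_mat N) = 1\<^sub>m n"
    using adj_mat[OF N] N det by (subst mult_smult_distrib[of _ n n _ n]) (auto intro!: eq_matI)
qed

lemma poly_char_poly_eq_det:
  fixes A :: "'a :: field mat"
  assumes A: "A \<in> carrier_mat n n"
  shows "poly (char_poly A) t = det (t \<cdot>\<^sub>m 1\<^sub>m n - A)"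
proof -
  have "- char_matrix A t = t \<cdot>\<^sub>m 1\<^sub>m n - A"
    unfolding char_matrix_def using A by (auto intro!: eq_matI)
  then show ?thesis
    using char_poly_matrix[OF A] by simp
qed

lemma poly_eqI_cofinite:
  fixes p q :: "'a :: {idom, ring_char_0} poly"
  assumes "finite S" and "\<And>t. t \<notin> S \<Longrightarrow> poly p t = poly q t"
  shows "p = q"
proof (rule ccontr)
  assume "p \<noteq> q"
  then have "finite {t. poly (p - q) t = 0}"
    by (intro poly_roots_finite) simp
  moreover have "- S \<subseteq> {t. poly (p - q) t = 0}"
    using assms(2) by auto
  ultimately have "finite (- S)"
    by (rule finite_subset[rotated])
  with \<open>finite S\<close> have "finite (S \<union> - S)"
    by simp
  then show False
    using infinite_UNIV_char_0[where 'a = 'a] by simp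
qed

lemma left_eigenvector_scalar_prod_mult:
  assumes "left_eigenvector A w l" and A: "A \<in> carrier_mat n n" and u: "u \<in> carrier_vec n"
  shows "conjugate w \<bullet> (A *\<^sub>v u) = l * (conjugate w \<bullet> u)"
proof -
  have w: "w \<in> carrier_vec n" and wA: "vec_star w * A = l \<cdot>\<^sub>m vec_star w"
    using assms unfolding left_eigenvector_def by auto
  have W: "vec_star w \<in> carrier_mat 1 n"
    using w unfolding vec_star_def by auto
  have "conjugate w \<bullet> (A *\<^sub>v u) = (vec_star w *\<^sub>v (A *\<^sub>v u)) $ 0"
    using w unfolding vec_star_def by simp
  also have "\<dots> = ((vec_star w * A) *\<^sub>v u) $ 0"
    using W A u by simp
  also have "\<dots> = l * (conjugate w \<bullet> u)"
    unfolding wA using w u unfolding vec_star_def by simp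
  finally show ?thesis .
qed

lemma left_eigenvector_resolvent:
  assumes "left_eigenvector A w l" and A: "A \<in> carrier_mat n n"
    and Ni: "Ni \<in> carrier_mat n n" and inv: "(t \<cdot>\<^sub>m 1\<^sub>m n - A) * Ni = 1\<^sub>m n"
    and x: "x \<in> carrier_vec n"
  shows "(t - l) * (conjugate w \<bullet> (Ni *\<^sub>v x)) = conjugate w \<bullet> x"
proof -
  have w: "w \<in> carrier_vec n"
    using assms unfolding left_eigenvector_def by auto
  let ?u = "Ni *\<^sub>v x"
  have u: "?u \<in> carrier_vec n" using Ni x by simp
  have shift_mult: "(t \<cdot>\<^sub>m 1\<^sub>m n - A) *\<^sub>v v = t \<cdot>\<^sub>v v - A *\<^sub>v v" if "v \<in> carrier_vec n" for v
    using A that by (subst minus_mult_distrib_mat_vec[of _ n n]) (auto intro!: eq_vecI)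
  have "x = ((t \<cdot>\<^sub>m 1\<^sub>m n - A) * Ni) *\<^sub>v x"
    using inv x by simp
  also have "\<dots> = (t \<cdot>\<^sub>m 1\<^sub>m n - A) *\<^sub>v ?u"
    using A Ni x by (intro assoc_mult_mat_vec[of _ n n]) auto
  also have "\<dots> = t \<cdot>\<^sub>v ?u - A *\<^sub>v ?u"
    using u by (rule shift_mult)
  finally have "conjugate w \<bullet> x = conjugate w \<bullet> (t \<cdot>\<^sub>v ?u - A *\<^sub>v ?u)"
    by (rule arg_cong)
  also have "\<dots> = conjugate w \<bullet> (t \<cdot>\<^sub>v ?u) - conjugate w \<bullet> (A *\<^sub>v ?u)"
    using w u A by (intro scalar_prod_minus_distrib[of _ n]) auto
  also have "\<dots> = t * (conjugate w \<bullet> ?u) - conjugate w \<bullet> (A *\<^sub>v ?u)"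
    using w u by (simp add: scalar_prod_smult_distrib[of _ n])
  finally have "conjugate w \<bullet> x = t * (conjugate w \<bullet> ?u) - conjugate w \<bullet> (A *\<^sub>v ?u)" .
  then show ?thesis
    using left_eigenvector_scalar_prod_mult[OF assms(1) A u] by (simp add: algebra_simps)
qed

lemma conjugate_sum_vec_scalar_prod:
  fixes w :: "'i \<Rightarrow> 'a :: conjugatable_ring vec"
  assumes J: "finite J" and w: "\<And>j. j \<in> J \<Longrightarrow> w j \<in> carrier_vec n"
    and u: "u \<in> carrier_vec n"
  shows "conjugate (vec n (\<lambda>i. \<Sum>j\<in>J. w j $ i)) \<bullet> u = (\<Sum>j\<in>J. conjugate (w j) \<bullet> u)"
proof -
  have "conjugate (vec n (\<lambda>i. \<Sum>j\<in>J. w j $ i)) \<bullet> u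
      = (\<Sum>i<n. \<Sum>j\<in>J. conjugate (w j $ i) * u $ i)"
    using J u by (simp add: scalar_prod_def lessThan_atLeast0 sum_conjugate sum_distrib_right)
  also have "\<dots> = (\<Sum>j\<in>J. \<Sum>i<n. conjugate (w j $ i) * u $ i)"
    by (rule sum.swap)
  also have "\<dots> = (\<Sum>j\<in>J. conjugate (w j) \<bullet> u)"
  proof (rule sum.cong[OF refl])
    fix j
    assume "j \<in> J"
    then have "w j \<in> carrier_vec n"
      by (rule w)
    with u show "(\<Sum>i<n. conjugate (w j $ i) * u $ i) = conjugate (w j) \<bullet> u"
      unfolding scalar_prod_def by (auto intro!: sum.cong)
  qed
  finally show ?thesis .
qed

lemma poly_char_poly_rank_one_update:
  fixes A :: "complex mat" and lam :: "nat \<Rightarrow> complex" and w :: "nat \<Rightarrow> complex vec"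
  assumes A: "A \<in> carrier_mat n n"
    and eig: "char_poly A = (\<Prod>i\<in>{1..n}. [:- lam i, 1:])"
    and k: "1 \<le> k" "k \<le> n"
    and lev: "\<And>j. j \<in> {1..k} \<Longrightarrow> left_eigenvector A (w j) (lam j)"
    and x: "x \<in> carrier_vec n"
    and orth: "\<And>j. j \<in> {2..k} \<Longrightarrow> conjugate (w j) \<bullet> x = 0"
    and t: "t \<notin> lam ` {1..n}"
  shows "poly (char_poly (A + mat_of_cols n [x] * vec_star (vec n (\<lambda>i. \<Sum>j\<in>{1..k}. w j $ i)))) t
    = (t - (lam 1 + conjugate (w 1) \<bullet> x)) * (\<Prod>i\<in>{2..n}. t - lam i)"
proof -
  define v where "v = vec n (\<lambda>i. \<Sum>j\<in>{1..k}. w j $ i)"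
  define N where "N = t \<cdot>\<^sub>m 1\<^sub>m n - A"
  have N: "N \<in> carrier_mat n n"
    unfolding N_def using A by auto
  have w: "w j \<in> carrier_vec n" if "j \<in> {1..k}" for j
    using lev[OF that] A unfolding left_eigenvector_def by auto
  have v: "v \<in> carrier_vec n" and cv: "conjugate v \<in> carrier_vec n"
    unfolding v_def by simp_all
  have "det N = (\<Prod>i\<in>{1..n}. t - lam i)"
    using poly_char_poly_eq_det[OF A, of t] by (simp add: N_def eig poly_prod)
  also have "\<dots> = (t - lam 1) * (\<Prod>i\<in>{2..n}. t - lam i)"
    using k by (subst prod.remove[of _ 1]) (auto intro!: prod.cong)
  finally have det_N: "det N = (t - lam 1) * (\<Prod>i\<in>{2..n}. t - lam i)" .
  have t_lam: "t - lam j \<noteq> 0" if "j \<in> {1..k}" for j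
    using t that k by force
  then have "det N \<noteq> 0"
    using t k unfolding det_N by (auto simp: prod_zero_iff)
  then obtain Ni where Ni: "Ni \<in> carrier_mat n n" and inv: "N * Ni = 1\<^sub>m n"
    by (rule right_inverse_of_det_nonzero[OF N])
  have res: "(t - lam j) * (conjugate (w j) \<bullet> (Ni *\<^sub>v x)) = conjugate (w j) \<bullet> x" if "j \<in> {1..k}" for j
    using left_eigenvector_resolvent[OF lev[OF that] A Ni inv[unfolded N_def] x] .
  have "conjugate v \<bullet> (Ni *\<^sub>v x) = (\<Sum>j\<in>{1..k}. conjugate (w j) \<bullet> (Ni *\<^sub>v x))"
    unfolding v_def using w Ni x by (intro conjugate_sum_vec_scalar_prod) auto
  also have "\<dots> = conjugate (w 1) \<bullet> (Ni *\<^sub>v x)"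
  proof -
    have "conjugate (w j) \<bullet> (Ni *\<^sub>v x) = 0" if "j \<in> {1..k} - {1}" for j
      using that res[of j] t_lam[of j] orth[of j] by auto
    then show ?thesis
      using k by (subst sum.remove[of _ 1]) auto
  qed
  finally have resolvent_v: "(t - lam 1) * (conjugate v \<bullet> (Ni *\<^sub>v x)) = conjugate (w 1) \<bullet> x"
    using res[of 1] k by simp
  have "t \<cdot>\<^sub>m 1\<^sub>m n - (A + mat_of_cols n [x] * vec_star v) = N - mat_of_cols n [x] * mat_of_row (conjugate v)"
    unfolding N_def vec_star_def using A v by (auto intro!: eq_matI)
  moreover have "mat_of_cols n [x] * vec_star v \<in> carrier_mat n n"
    using cv unfolding vec_star_def by (intro mult_carrier_mat[of _ n 1]) auto
  ultimately have "poly (char_poly (A + mat_of_cols n [x] * vec_star v)) t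
      = det (N - mat_of_cols n [x] * mat_of_row (conjugate v))"
    using A by (subst poly_char_poly_eq_det[of _ n]) auto
  also have "\<dots> = det N * (1 - conjugate v \<bullet> (Ni *\<^sub>v x))"
    by (rule det_minus_rank_one[OF N Ni inv x cv])
  also have "\<dots> = ((t - lam 1) - (t - lam 1) * (conjugate v \<bullet> (Ni *\<^sub>v x))) * (\<Prod>i\<in>{2..n}. t - lam i)"
    unfolding det_N by (simp add: algebra_simps)
  also have "\<dots> = (t - (lam 1 + conjugate (w 1) \<bullet> x)) * (\<Prod>i\<in>{2..n}. t - lam i)"
    unfolding resolvent_v by (simp add: algebra_simps)
  finally show ?thesis
    unfolding v_def .
qed

theorem theorem3p6:
  fixes A :: "complex mat" and n k :: nat and lam :: "nat \<Rightarrow> complex"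
    and w :: "nat \<Rightarrow> complex vec" and x :: "complex vec"
  assumes A: "A \<in> carrier_mat n n"
    and eig: "char_poly A = (\<Prod>i\<in>{1..n}. [:- lam i, 1:])"
    and k: "1 \<le> k" "k \<le> n"
    and lev: "\<And>j. j \<in> {1..k} \<Longrightarrow> left_eigenvector A (w j) (lam j)"
    and x: "x \<in> carrier_vec n"
    and orth: "\<And>j. j \<in> {2..k} \<Longrightarrow> conjugate (w j) \<bullet> x = 0"
  shows "char_poly (A + mat_of_cols n [x] * vec_star (vec n (\<lambda>i. \<Sum>j\<in>{1..k}. w j $ i)))
           = [:- (lam 1 + conjugate (w 1) \<bullet> x), 1:] * (\<Prod>i\<in>{2..n}. [:- lam i, 1:])"
proof (rule poly_eqI_cofinite)
  show "finite (lam ` {1..n})"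
    by simp
  fix t
  assume "t \<notin> lam ` {1..n}"
  then show "poly (char_poly (A + mat_of_cols n [x] * vec_star (vec n (\<lambda>i. \<Sum>j\<in>{1..k}. w j $ i)))) t
      = poly ([:- (lam 1 + conjugate (w 1) \<bullet> x), 1:] * (\<Prod>i\<in>{2..n}. [:- lam i, 1:])) t"
    using poly_char_poly_rank_one_update[OF A eig k lev x orth] by (simp add: poly_prod algebra_simps)
qed

end
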